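(* Let $n$ be odd and let $L=\bigoplus_{i\in\mathbb{Z}/n\mathbb{Z}}L_i$ be a $(\mathbb{Z}/n\mathbb{Z})$-graded Lie algebra over a field with $L_0=0$ that satisfies the selective metabelian condition. Let $a,b,c\in\mathbb{Z}/n\mathbb{Z}$ with the additive order of $a$ greater than $3$. Then $$\big[x_c,\,y_1,\,y_2,\,\dots,\,y_7\big]=0$$ for every $x_c\in L_c$ and all elements $y_1,\dots,y_7$ (not necessarily equal) each of the form $y_k=[v_k,w_k]$ with $v_k\in L_b$, $w_k\in L_{a-b}$.
   Context: A $(\mathbb{Z}/n\mathbb{Z})$-graded Lie algebra is $L=\bigoplus_{i=0}^{n-1}L_i$ with $[L_i,L_j]\subseteq L_{i+j \bmod n}$. Products $[y_1,\dots,y_s]$ are left-normed: $[\dots[[y_1,y_2],y_3],\dots,y_s]$. A sequence $(a_1,\dots,a_k)$ in $\mathbb{Z}/n\mathbb{Z}$ is $(-1)$-dependent if $t_1a_1+\dots+t_ka_k=0$ for some $t_i\in\{0,1\}$ not all zero, and $(-1)$-independent otherwise. $L$ satisfies the selective metabelian condition if $\big[[x_{d_1},x_{d_2}],[x_{d_3},x_{d_4}]\big]=0$ for all $x_{d_i}\in L_{d_i}$ whenever $(d_1,d_2,d_3,d_4)$ is $(-1)$-independent. *)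

theory Defs
  imports Main "HOL.Vector_Spaces"
begin

definition lie_algebra :: "('k::field \<Rightarrow> 'v::ab_group_add \<Rightarrow> 'v) \<Rightarrow> ('v \<Rightarrow> 'v \<Rightarrow> 'v) \<Rightarrow> bool" where
  "lie_algebra scale br \<longleftrightarrow>
     vector_space scale \<and>
     (\<forall>x. Vector_Spaces.linear scale scale (br x)) \<and>
     (\<forall>y. Vector_Spaces.linear scale scale (\<lambda>x. br x y)) \<and>
     (\<forall>x. br x x = 0) \<and>
     (\<forall>x y z. br x (br y z) + br y (br z x) + br z (br x y) = 0)"

text \<open>Z/nZ-grading: components G i for i in {0..<n} (residues represented by
integers 0..n-1; component of an arbitrary integer index i is G (i mod n)).\<close>
definition graded_lie_algebra ::
  "('k::field \<Rightarrow> 'v::ab_group_add \<Rightarrow> 'v) \<Rightarrow> ('v \<Rightarrow> 'v \<Rightarrow> 'v) \<Rightarrow> int \<Rightarrow> (int \<Rightarrow> 'v set) \<Rightarrow> bool" where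
  "graded_lie_algebra scale br n G \<longleftrightarrow>
     lie_algebra scale br \<and> n > 0 \<and>
     (\<forall>i\<in>{0..<n}. module.subspace scale (G i)) \<and>
     (\<forall>x. \<exists>f. (\<forall>i\<in>{0..<n}. f i \<in> G i) \<and> x = (\<Sum>i\<in>{0..<n}. f i)) \<and>
     (\<forall>f. (\<forall>i\<in>{0..<n}. f i \<in> G i) \<and> (\<Sum>i\<in>{0..<n}. f i) = 0 \<longrightarrow> (\<forall>i\<in>{0..<n}. f i = 0)) \<and>
     (\<forall>i\<in>{0..<n}. \<forall>j\<in>{0..<n}. \<forall>x\<in>G i. \<forall>y\<in>G j. br x y \<in> G ((i + j) mod n))"

definition minus1_dependent :: "int \<Rightarrow> int list \<Rightarrow> bool" where
  "minus1_dependent n ds \<longleftrightarrow>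
     (\<exists>T \<subseteq> {..<length ds}. T \<noteq> {} \<and> (\<Sum>i\<in>T. ds ! i) mod n = 0)"

definition selective_metabelian ::
  "('v::ab_group_add \<Rightarrow> 'v \<Rightarrow> 'v) \<Rightarrow> int \<Rightarrow> (int \<Rightarrow> 'v set) \<Rightarrow> bool" where
  "selective_metabelian br n G \<longleftrightarrow>
     (\<forall>d1 d2 d3 d4. \<not> minus1_dependent n [d1, d2, d3, d4] \<longrightarrow>
        (\<forall>x1\<in>G (d1 mod n). \<forall>x2\<in>G (d2 mod n). \<forall>x3\<in>G (d3 mod n). \<forall>x4\<in>G (d4 mod n).
           br (br x1 x2) (br x3 x4) = 0))"

definition add_order :: "int \<Rightarrow> int \<Rightarrow> nat" where
  "add_order n a = (LEAST k::nat. k > 0 \<and> (int k * a) mod n = 0)"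

definition left_normed :: "('v \<Rightarrow> 'v \<Rightarrow> 'v) \<Rightarrow> 'v \<Rightarrow> 'v list \<Rightarrow> 'v" where
  "left_normed br x ys = foldl br x ys"

end

theory Submission
  imports Defs
begin

text \<open>Every \<open>y\<^sub>k\<close> lies in \<open>L\<^sub>a\<close>, so \<open>z\<^sub>j = [x, y\<^sub>1, \<dots>, y\<^sub>j]\<close> lies in \<open>L\<^bsub>c + ja\<^esub>\<close> and vanishes as soon
  as \<open>c + ja = 0\<close>. If \<open>b = 0\<close> or \<open>a - b = 0\<close> then \<open>y\<^sub>1 = 0\<close>. Since \<open>n\<close> is odd, \<open>a\<close> has order at
  least 5, so the degrees \<open>c + ja\<close>, \<open>j < 5\<close>, are distinct.

  If \<open>b\<close>, \<open>a - b\<close>, \<open>a + b\<close>, \<open>2a - b\<close> are all nonzero, one of these five degrees avoids the four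
  values \<open>-b, b - a, -a - b, b - 2a\<close>; for that \<open>j\<close> the degrees \<open>(c + ja, a, b, a - b)\<close> of
  \<open>z\<^bsub>j+2\<^esub> = [[z\<^sub>j, y\<^bsub>j+1\<^esub>], [v, w]]\<close> are \<open>(-1)\<close>-independent unless one of \<open>z\<^sub>j, z\<^bsub>j+1\<^esub>, z\<^bsub>j+2\<^esub>\<close>
  has degree 0.

  If \<open>a + b = 0\<close> (the case \<open>2a - b = 0\<close> reduces to it by swapping the factors of each \<open>y\<^sub>k\<close>),
  all \<open>y\<^sub>k\<close> lie in \<open>[L\<^bsub>-a\<^esub>, L\<^bsub>2a\<^esub>]\<close>. Expanding \<open>z\<^sub>4 = [[z\<^sub>2, [V, W]], [V', W']]\<close> by the Jacobi
  identity, the selective metabelian condition applies to the degrees \<open>(c + a, 2a, -a, 2a)\<close> and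
  \<open>(c + 2a, 2a, -a, 2a)\<close>, and the remaining term contains \<open>[V, [V', W']] \<in> L\<^sub>0 = 0\<close>, unless
  some \<open>z\<^sub>j\<close> with \<open>j \<le> 6\<close> has degree 0. So six factors already suffice.\<close>

lemma not_minus1_dependent_4I:
  fixes n d1 d2 d3 d4 :: int
  assumes "\<not> n dvd d1" "\<not> n dvd d2" "\<not> n dvd d3" "\<not> n dvd d4"
    "\<not> n dvd d1 + d2" "\<not> n dvd d1 + d3" "\<not> n dvd d1 + d4"
    "\<not> n dvd d2 + d3" "\<not> n dvd d2 + d4" "\<not> n dvd d3 + d4"
    "\<not> n dvd d1 + d2 + d3" "\<not> n dvd d1 + d2 + d4" "\<not> n dvd d1 + d3 + d4"
    "\<not> n dvd d2 + d3 + d4" "\<not> n dvd d1 + d2 + d3 + d4"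
  shows "\<not> minus1_dependent n [d1, d2, d3, d4]"
proof
  assume "minus1_dependent n [d1, d2, d3, d4]"
  moreover have "{..<length [d1, d2, d3, d4]} = {0, 1, 2, 3}"
    by auto
  ultimately obtain T where "T \<in> Pow {0, 1, 2, 3} - {{}}" "n dvd (\<Sum>i\<in>T. [d1, d2, d3, d4] ! i)"
    unfolding minus1_dependent_def by (auto simp: mod_eq_0_iff_dvd)
  then show False
    using assms by (auto simp: Pow_insert ac_simps)
qed

lemma add_order_gt_3_imp_not_dvd:
  fixes n a :: int
  assumes "odd n" "3 < add_order n a" "0 < k" "k < 5"
  shows "\<not> n dvd int k * a"
proof
  assume dvd: "n dvd int k * a"
  have order_le: "add_order n a \<le> j" if "0 < j" "n dvd int j * a" for j
    unfolding add_order_def using that by (intro Least_le) simp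
  show False
  proof (cases "k = 4")
    case True
    have "coprime n 2"
      using \<open>odd n\<close> by (simp add: coprime_right_2_iff_odd)
    moreover have "n dvd 2 * (2 * a)"
      using dvd True by simp
    ultimately have "n dvd int 1 * a"
      by (metis coprime_dvd_mult_right_iff mult_1 of_nat_1)
    then show False
      using order_le[of 1] assms(2) by simp
  next
    case False
    then show False
      using order_le[of k] dvd assms by simp
  qed
qed

lemma exists_multiple_avoiding:
  fixes n a c :: int and F :: "int set"
  assumes "finite F" "card F < m"
    and not_dvd: "\<And>k. 0 < k \<Longrightarrow> k < m \<Longrightarrow> \<not> n dvd int k * a"
  shows "\<exists>j<m. \<forall>f\<in>F. \<not> n dvd c + int j * a - f"
proof (rule ccontr)
  assume hit: "\<not> ?thesis"
  define g where "g j = (c + int j * a) mod n" for j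
  have "g ` {..<m} \<subseteq> (\<lambda>f. f mod n) ` F"
    using hit by (fastforce simp: g_def mod_eq_dvd_iff)
  moreover have "inj_on g {..<m}"
  proof (rule linorder_inj_onI')
    fix i j assume "i \<in> {..<m}" "j \<in> {..<m}" "i < j"
    then have "\<not> n dvd int (j - i) * a"
      using not_dvd[of "j - i"] by simp
    then have "\<not> n dvd (c + int i * a) - (c + int j * a)"
      using \<open>i < j\<close> by (simp add: of_nat_diff left_diff_distrib dvd_diff_commute)
    then show "g i \<noteq> g j"
      by (simp add: g_def mod_eq_dvd_iff)
  qed
  ultimately have "card {..<m} \<le> card ((\<lambda>f. f mod n) ` F)"
    using \<open>finite F\<close> by (intro card_inj_on_le) auto
  also have "\<dots> \<le> card F"
    using \<open>finite F\<close> by (rule card_image_le)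
  finally show False
    using \<open>card F < m\<close> by simp
qed

locale lie_alg =
  fixes scale :: "'k::field \<Rightarrow> 'v::ab_group_add \<Rightarrow> 'v" and br :: "'v \<Rightarrow> 'v \<Rightarrow> 'v"
  assumes lie: "lie_algebra scale br"
begin

lemma module_hom_br_right: "module_hom scale scale (br x)"
  using lie by (simp add: lie_algebra_def module_hom_iff_linear)

lemma module_hom_br_left: "module_hom scale scale (\<lambda>y. br y x)"
  using lie by (simp add: lie_algebra_def module_hom_iff_linear)

lemma br_zero_right [simp]: "br x 0 = 0"
  using module_hom.zero[OF module_hom_br_right] .

lemma br_zero_left [simp]: "br 0 x = 0"
  using module_hom.zero[OF module_hom_br_left] .

lemma br_minus_left: "br (- x) y = - br x y"
  using module_hom.neg[OF module_hom_br_left] .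

lemma br_diff_left: "br (x - y) z = br x z - br y z"
  using module_hom.diff[OF module_hom_br_left] .

lemma br_anticommute: "br x y = - br y x"
proof -
  have "0 = br (x + y) (x + y)"
    using lie by (simp add: lie_algebra_def)
  also have "\<dots> = br x x + br x y + br y x + br y y"
    by (simp add: module_hom.add[OF module_hom_br_left] module_hom.add[OF module_hom_br_right])
  also have "\<dots> = br x y + br y x"
    using lie by (simp add: lie_algebra_def)
  finally show ?thesis
    by (simp add: eq_neg_iff_add_eq_0)
qed

lemma br_br_right: "br x (br y z) = br (br x y) z - br (br x z) y"
proof -
  have "br x (br y z) + br y (br z x) + br z (br x y) = 0"
    using lie by (simp add: lie_algebra_def)
  moreover have "br y (br z x) = br (br x z) y"
    using br_anticommute[of y] br_anticommute[of z x] br_minus_left by simp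
  moreover have "br z (br x y) = - br (br x y) z"
    by (rule br_anticommute)
  ultimately show ?thesis
    by (simp add: algebra_simps)
qed

lemma br_br_left: "br (br x y) z = br (br x z) y + br x (br y z)"
  using br_br_right[of x y z] by simp

lemma left_normed_zero_left: "left_normed br 0 ys = 0"
  unfolding left_normed_def by (induction ys) simp_all

lemma left_normed_eq_0_if_prefix:
  assumes "left_normed br x (take j ys) = 0"
  shows "left_normed br x ys = 0"
proof -
  have "left_normed br x ys = left_normed br (left_normed br x (take j ys)) (drop j ys)"
    unfolding left_normed_def by (simp flip: foldl_append)
  then show ?thesis
    using assms by (simp add: left_normed_zero_left)
qed

lemma left_normed_take_Suc:
  "j < length ys \<Longrightarrow> left_normed br x (take (Suc j) ys) = br (left_normed br x (take j ys)) (ys ! j)"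
  by (simp add: left_normed_def take_Suc_conv_app_nth)

lemma left_normed_eq_0_if_zero_mem:
  assumes "0 \<in> set ys"
  shows "left_normed br x ys = 0"
proof -
  obtain j where "j < length ys" "ys ! j = 0"
    using assms by (auto simp: in_set_conv_nth)
  then have "left_normed br x (take (Suc j) ys) = 0"
    by (simp add: left_normed_take_Suc)
  then show ?thesis
    by (rule left_normed_eq_0_if_prefix)
qed

end

locale graded_selective_metabelian =
  fixes scale :: "'k::field \<Rightarrow> 'v::ab_group_add \<Rightarrow> 'v" and br :: "'v \<Rightarrow> 'v \<Rightarrow> 'v"
    and n :: int and G :: "int \<Rightarrow> 'v set"
  assumes graded: "graded_lie_algebra scale br n G"
    and zero_component: "G 0 = {0}"
    and selective: "selective_metabelian br n G"

sublocale graded_selective_metabelian \<subseteq> lie_alg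
  using graded by unfold_locales (simp add: graded_lie_algebra_def)

context graded_selective_metabelian
begin

lemma n_pos: "0 < n"
  using graded by (simp add: graded_lie_algebra_def)

lemma br_mem_G:
  assumes "x \<in> G (i mod n)" "y \<in> G (j mod n)"
  shows "br x y \<in> G ((i + j) mod n)"
proof -
  have "i mod n \<in> {0..<n}" "j mod n \<in> {0..<n}"
    using n_pos by simp_all
  moreover have "\<forall>i\<in>{0..<n}. \<forall>j\<in>{0..<n}. \<forall>x\<in>G i. \<forall>y\<in>G j. br x y \<in> G ((i + j) mod n)"
    using graded by (simp add: graded_lie_algebra_def)
  ultimately have "br x y \<in> G ((i mod n + j mod n) mod n)"
    using assms by blast
  then show ?thesis
    by (simp add: mod_add_eq)
qed

lemma minus_mem_G:
  assumes "x \<in> G (i mod n)"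
  shows "- x \<in> G (i mod n)"
proof -
  have "module scale" "module.subspace scale (G (i mod n))"
    using graded n_pos by (simp_all add: graded_lie_algebra_def lie_algebra_def module_iff_vector_space)
  then show ?thesis
    using assms by (rule module.subspace_neg)
qed

lemma mem_G_eq_0: "x \<in> G (i mod n) \<Longrightarrow> n dvd i \<Longrightarrow> x = 0"
  using zero_component by simp

lemma br_br_eq_0:
  assumes "\<not> minus1_dependent n [d1, d2, d3, d4]"
    and "x1 \<in> G (d1 mod n)" "x2 \<in> G (d2 mod n)" "x3 \<in> G (d3 mod n)" "x4 \<in> G (d4 mod n)"
  shows "br (br x1 x2) (br x3 x4) = 0"
proof -
  have "\<forall>x1\<in>G (d1 mod n). \<forall>x2\<in>G (d2 mod n). \<forall>x3\<in>G (d3 mod n). \<forall>x4\<in>G (d4 mod n).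
      br (br x1 x2) (br x3 x4) = 0"
    using selective assms(1) unfolding selective_metabelian_def by simp
  then show ?thesis
    using assms(2-5) by simp
qed

definition brackets :: "int \<Rightarrow> int \<Rightarrow> 'v set" where
  "brackets i j = {br v w | v w. v \<in> G (i mod n) \<and> w \<in> G (j mod n)}"

lemma brackets_commute: "brackets i j = brackets j i"
proof -
  have "br v w \<in> brackets j i" if "v \<in> G (i mod n)" "w \<in> G (j mod n)" for i j v w
  proof -
    have "br v w = br (- w) v"
      using br_anticommute[of w v] br_minus_left[of w v] by simp
    then show ?thesis
      unfolding brackets_def using that minus_mem_G by blast
  qed
  then have "brackets i j \<subseteq> brackets j i" for i j
    unfolding brackets_def by blast
  then show ?thesis
    by blast
qed

lemma brackets_subset_G: "brackets i j \<subseteq> G ((i + j) mod n)"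
  unfolding brackets_def using br_mem_G by blast

lemma brackets_subset_zero: "n dvd i \<Longrightarrow> brackets i j \<subseteq> {0}"
  unfolding brackets_def using mem_G_eq_0 by fastforce

lemma left_normed_take_mem_G:
  assumes "x \<in> G (c mod n)" "set ys \<subseteq> G (a mod n)" "j \<le> length ys"
  shows "left_normed br x (take j ys) \<in> G ((c + int j * a) mod n)"
  using assms(3)
proof (induction j)
  case 0
  then show ?case
    using assms(1) by (simp add: left_normed_def)
next
  case (Suc j)
  then have "br (left_normed br x (take j ys)) (ys ! j) \<in> G ((c + int j * a + a) mod n)"
    using assms(2) nth_mem by (intro br_mem_G) auto
  then show ?case
    using Suc.prems by (simp add: left_normed_take_Suc algebra_simps)
qed

lemma left_normed_eq_0_if_degree_dvd:
  assumes "x \<in> G (c mod n)" "set ys \<subseteq> G (a mod n)" "t \<le> length ys" "n dvd c + int t * a"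
  shows "left_normed br x ys = 0"
proof -
  have "left_normed br x (take t ys) \<in> G ((c + int t * a) mod n)"
    using assms(1-3) by (rule left_normed_take_mem_G)
  then have "left_normed br x (take t ys) = 0"
    using assms(4) by (rule mem_G_eq_0)
  then show ?thesis
    by (rule left_normed_eq_0_if_prefix)
qed

lemma br_br_eq_0_neg_double_brackets:
  assumes not_dvd: "\<And>k. 0 < k \<Longrightarrow> k < 5 \<Longrightarrow> \<not> n dvd int k * a"
    and degrees: "\<And>t. t \<le> 6 \<Longrightarrow> \<not> n dvd c + int t * a"
    and z: "z \<in> G ((c + 2 * a) mod n)"
    and y: "y \<in> brackets (- a) (2 * a)" and y': "y' \<in> brackets (- a) (2 * a)"
  shows "br (br z y) y' = 0"
proof -
  obtain V W where V: "V \<in> G ((- a) mod n)" and W: "W \<in> G ((2 * a) mod n)" and y_eq: "y = br V W"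
    using y unfolding brackets_def by blast
  obtain V' W' where V': "V' \<in> G ((- a) mod n)" and W': "W' \<in> G ((2 * a) mod n)"
    and y'_eq: "y' = br V' W'"
    using y' unfolding brackets_def by blast
  have a_multiples: "\<not> n dvd a" "\<not> n dvd 2 * a" "\<not> n dvd 3 * a" "\<not> n dvd 4 * a"
    using not_dvd[of 1] not_dvd[of 2] not_dvd[of 3] not_dvd[of 4] by simp_all
  have c_shifts: "\<not> n dvd c" "\<not> n dvd c + a" "\<not> n dvd c + 2 * a" "\<not> n dvd c + 3 * a"
    "\<not> n dvd c + 4 * a" "\<not> n dvd c + 5 * a" "\<not> n dvd c + 6 * a"
    using degrees[of 0] degrees[of 1] degrees[of 2] degrees[of 3] degrees[of 4] degrees[of 5]
      degrees[of 6]
    by simp_all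
  have "\<not> minus1_dependent n [c + 2 * a + - a, 2 * a, - a, 2 * a]"
    by (rule not_minus1_dependent_4I) (use a_multiples c_shifts in \<open>simp_all add: algebra_simps\<close>)
  then have zVW: "br (br (br z V) W) y' = 0"
    unfolding y'_eq using br_mem_G[OF z V] W V' W' by (rule br_br_eq_0)
  have "\<not> minus1_dependent n [c + 2 * a, 2 * a, - a, 2 * a]"
    by (rule not_minus1_dependent_4I) (use a_multiples c_shifts in \<open>simp_all add: algebra_simps\<close>)
  then have zW: "br (br z W) y' = 0"
    unfolding y'_eq using z W V' W' by (rule br_br_eq_0)
  have "br V y' \<in> G ((- a + (- a + 2 * a)) mod n)"
    unfolding y'_eq using V br_mem_G[OF V' W'] by (rule br_mem_G)
  then have Vy': "br V y' = 0"
    by (rule mem_G_eq_0) simp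
  have "br (br z y) y' = br (br (br z V) W) y' - br (br (br z W) V) y'"
    unfolding y_eq br_br_right[of z V W] by (rule br_diff_left)
  also have "br (br (br z W) V) y' = br (br (br z W) y') V + br (br z W) (br V y')"
    by (rule br_br_left)
  finally show ?thesis
    using zVW zW Vy' by simp
qed

lemma left_normed_eq_0_if_dvd_add:
  assumes not_dvd: "\<And>k. 0 < k \<Longrightarrow> k < 5 \<Longrightarrow> \<not> n dvd int k * a"
    and "n dvd a + b"
    and x: "x \<in> G (c mod n)" and ys: "set ys \<subseteq> brackets b (a - b)" and len: "6 \<le> length ys"
  shows "left_normed br x ys = 0"
proof -
  have ys_G: "set ys \<subseteq> G (a mod n)"
    using ys brackets_subset_G[of b "a - b"] by simp
  show ?thesis
  proof (cases "\<exists>t\<le>6. n dvd c + int t * a")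
    case True
    then obtain t where "t \<le> 6" "n dvd c + int t * a"
      by blast
    then show ?thesis
      using len by (intro left_normed_eq_0_if_degree_dvd[OF x ys_G]) simp_all
  next
    case False
    have "b mod n = (- a) mod n" "(a - b) mod n = (2 * a) mod n"
      using \<open>n dvd a + b\<close> by (simp_all add: mod_eq_dvd_iff dvd_diff_commute algebra_simps)
    then have "brackets b (a - b) = brackets (- a) (2 * a)"
      unfolding brackets_def by simp
    then have y23: "ys ! 2 \<in> brackets (- a) (2 * a)" "ys ! 3 \<in> brackets (- a) (2 * a)"
      using ys len nth_mem by fastforce+
    have z2: "left_normed br x (take 2 ys) \<in> G ((c + 2 * a) mod n)"
      using left_normed_take_mem_G[OF x ys_G, of 2] len by simp
    have "left_normed br x (take 4 ys) = br (br (left_normed br x (take 2 ys)) (ys ! 2)) (ys ! 3)"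
      using len left_normed_take_Suc[of 3 ys x] left_normed_take_Suc[of 2 ys x] by simp
    also have "\<dots> = 0"
      using not_dvd False z2 y23 by (intro br_br_eq_0_neg_double_brackets) auto
    finally show ?thesis
      by (rule left_normed_eq_0_if_prefix)
  qed
qed

lemma left_normed_eq_0_generic:
  assumes not_dvd: "\<And>k. 0 < k \<Longrightarrow> k < 5 \<Longrightarrow> \<not> n dvd int k * a"
    and b: "\<not> n dvd b" "\<not> n dvd a - b" "\<not> n dvd a + b" "\<not> n dvd 2 * a - b"
    and x: "x \<in> G (c mod n)" and ys: "set ys \<subseteq> brackets b (a - b)" and len: "6 \<le> length ys"
  shows "left_normed br x ys = 0"
proof -
  have ys_G: "set ys \<subseteq> G (a mod n)"
    using ys brackets_subset_G[of b "a - b"] by simp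
  obtain j where "j < 5" and avoid: "\<forall>f\<in>set [- b, b - a, - a - b, b - 2 * a]. \<not> n dvd c + int j * a - f"
    using exists_multiple_avoiding[of "set [- b, b - a, - a - b, b - 2 * a]" 5 n a c] not_dvd
      card_length[of "[- b, b - a, - a - b, b - 2 * a]"]
    by auto
  show ?thesis
  proof (cases "\<exists>t\<in>{j, j + 1, j + 2}. n dvd c + int t * a")
    case True
    then obtain t where "t \<in> {j, j + 1, j + 2}" "n dvd c + int t * a"
      by blast
    then show ?thesis
      using \<open>j < 5\<close> len by (intro left_normed_eq_0_if_degree_dvd[OF x ys_G]) auto
  next
    case False
    have "ys ! Suc j \<in> brackets b (a - b)"
      using ys nth_mem[of "Suc j" ys] \<open>j < 5\<close> len by auto
    then obtain v w where v: "v \<in> G (b mod n)" and w: "w \<in> G ((a - b) mod n)"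
      and "ys ! Suc j = br v w"
      unfolding brackets_def by blast
    have "\<not> minus1_dependent n [c + int j * a, a, b, a - b]"
      by (rule not_minus1_dependent_4I)
        (use False avoid b not_dvd[of 1] not_dvd[of 2] in \<open>simp_all add: algebra_simps\<close>)
    moreover have "left_normed br x (take j ys) \<in> G ((c + int j * a) mod n)"
      using \<open>j < 5\<close> len by (intro left_normed_take_mem_G[OF x ys_G]) simp
    moreover have "ys ! j \<in> G (a mod n)"
      using ys_G \<open>j < 5\<close> len nth_mem by fastforce
    ultimately have "br (br (left_normed br x (take j ys)) (ys ! j)) (br v w) = 0"
      using v w by (rule br_br_eq_0)
    moreover have "left_normed br x (take (Suc (Suc j)) ys)
        = br (br (left_normed br x (take j ys)) (ys ! j)) (br v w)"
      using \<open>j < 5\<close> len \<open>ys ! Suc j = br v w\<close> by (simp add: left_normed_take_Suc)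
    ultimately show ?thesis
      using left_normed_eq_0_if_prefix by metis
  qed
qed

lemma left_normed_brackets_eq_0:
  assumes not_dvd: "\<And>k. 0 < k \<Longrightarrow> k < 5 \<Longrightarrow> \<not> n dvd int k * a"
    and x: "x \<in> G (c mod n)" and ys: "set ys \<subseteq> brackets b (a - b)" and len: "6 \<le> length ys"
  shows "left_normed br x ys = 0"
proof -
  consider (zero_factor) "n dvd b \<or> n dvd a - b" | (neg) "n dvd a + b" | (neg_swapped) "n dvd 2 * a - b"
    | (generic) "\<not> n dvd b" "\<not> n dvd a - b" "\<not> n dvd a + b" "\<not> n dvd 2 * a - b"
    by blast
  then show ?thesis
  proof cases
    case zero_factor
    then have "set ys \<subseteq> {0}"
      using ys brackets_subset_zero brackets_commute by blast
    then have "0 \<in> set ys"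
      using len by (cases ys) auto
    then show ?thesis
      by (rule left_normed_eq_0_if_zero_mem)
  next
    case neg
    with not_dvd show ?thesis
      using x ys len by (rule left_normed_eq_0_if_dvd_add)
  next
    case neg_swapped
    then have "n dvd a + (a - b)"
      by (simp add: algebra_simps)
    moreover have "set ys \<subseteq> brackets (a - b) (a - (a - b))"
      using ys brackets_commute by simp
    ultimately show ?thesis
      using left_normed_eq_0_if_dvd_add[OF not_dvd _ x _ len] by blast
  next
    case generic
    then show ?thesis
      using not_dvd x ys len by (intro left_normed_eq_0_generic) simp_all
  qed
qed

end

theorem lemma2:
  fixes scale :: "'k::field \<Rightarrow> 'v::ab_group_add \<Rightarrow> 'v"
    and br :: "'v \<Rightarrow> 'v \<Rightarrow> 'v"
    and n :: int and G :: "int \<Rightarrow> 'v set"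
    and a b c :: int and x :: 'v and ys :: "'v list"
  assumes "odd n"
    and "graded_lie_algebra scale br n G"
    and "G 0 = {0}"
    and "selective_metabelian br n G"
    and "add_order n a > 3"
    and "x \<in> G (c mod n)"
    and "length ys = 7"
    and "\<forall>k<7. \<exists>v w. v \<in> G (b mod n) \<and> w \<in> G ((a - b) mod n) \<and> ys ! k = br v w"
  shows "left_normed br x ys = 0"
proof -
  interpret graded_selective_metabelian scale br n G
    by (rule graded_selective_metabelian.intro) (fact assms)+
  have not_dvd: "\<not> n dvd int k * a" if "0 < k" "k < 5" for k
    using assms(1,5) that by (rule add_order_gt_3_imp_not_dvd)
  have "set ys \<subseteq> brackets b (a - b)"
  proof
    fix y assume "y \<in> set ys"
    then obtain k where "k < 7" "y = ys ! k"
      using assms(7) by (auto simp: in_set_conv_nth)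
    then show "y \<in> brackets b (a - b)"
      using assms(8) unfolding brackets_def by blast
  qed
  then show ?thesis
    using not_dvd assms(6,7) by (intro left_normed_brackets_eq_0) simp_all
qed

end
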